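(* Let $I\subseteq\mathbb{R}$ be an interval containing $0$ and let $f:I\to\mathbb{R}$ be such that $f|_{I\cap[0,\infty)}$ is convex and $f(-x)=-f(x)$ whenever $x$ and $-x$ both belong to $I$. Then for every family of points $a_1,\dots,a_n\in I$ and every family of weights $p_1,\dots,p_n\in[0,\infty)$ with $\sum_{k=1}^n p_k=1$ and \[ \sum_{k=1}^n p_k a_k+\min\{a_1,\dots,a_n\}\ge0, \] we have \[ f\left(\sum_{k=1}^n p_k a_k\right)\le\sum_{k=1}^n p_k f(a_k). \] *)

theory Defs
  imports "HOL-Analysis.Analysis"
begin

end

theory Submission
  imports Defs
begin

text \<open>
  Let \<open>s\<close> be the weighted mean of the points. The hypothesis says that every point lies in
  \<open>[-s, \<infinity>)\<close>, so \<open>s \<ge> 0\<close>. Take a line \<open>\<ell>(x) = f s + L (x - s)\<close> supporting \<open>f\<close> at \<open>s\<close> from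
  below at the nonnegative points and at \<open>0\<close>, so that \<open>L \<ge> f s / s\<close>. A negative point
  \<open>a \<ge> -s\<close> satisfies \<open>f a = - f (-a) \<ge> (a / s) f s\<close> by convexity on \<open>[0, s]\<close> and \<open>f 0 = 0\<close>,
  and \<open>(a / s) f s \<ge> \<ell>(a)\<close> because \<open>a < s\<close> and \<open>L \<ge> f s / s\<close>. Hence \<open>\<ell> \<le> f\<close> at every point,
  and averaging gives \<open>f s = \<ell>(s) \<le> \<Sum> p\<^sub>k f(a\<^sub>k)\<close>.
\<close>

lemma convex_on_slope_left_le_right:
  fixes f :: "real \<Rightarrow> real"
  assumes "convex_on C f" "x \<in> C" "y \<in> C" "x < s" "s < y"
  shows "(f x - f s) / (x - s) \<le> (f y - f s) / (y - s)"
proof -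
  have "(f s - f y) / (s - y) = (f y - f s) / (y - s)"
    by (metis minus_diff_eq minus_divide_divide)
  then show ?thesis
    using convex_on_slope_le[OF assms] by linarith
qed

text \<open>No hypothesis \<open>s \<in> C\<close> is needed: if \<open>X\<close> has points on both sides of \<open>s\<close>,
  the three-slope inequality applies; otherwise any sufficiently large or small \<open>L\<close> works.\<close>

lemma convex_on_finite_supporting_line:
  fixes f :: "real \<Rightarrow> real"
  assumes f: "convex_on C f" and X: "finite X" "X \<subseteq> C"
  obtains L where "\<And>x. x \<in> X \<Longrightarrow> f s + L * (x - s) \<le> f x"
proof -
  define slope where "slope x = (f x - f s) / (x - s)" for x
  define left where "left = {x \<in> X. x < s}"
  define right where "right = {x \<in> X. s < x}"
  have fin: "finite left" "finite right"
    using X unfolding left_def right_def by auto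
  obtain L where L_left: "\<And>x. x \<in> left \<Longrightarrow> slope x \<le> L"
    and L_right: "\<And>x. x \<in> right \<Longrightarrow> L \<le> slope x"
  proof (cases "left = {}")
    case True
    show ?thesis
      by (rule that[of "Min (insert 0 (slope ` right))"]) (use True fin in auto)
  next
    case False
    have "Max (slope ` left) \<in> slope ` left"
      using False fin by (intro Max_in) auto
    then obtain x0 where x0: "x0 \<in> left" "slope x0 = Max (slope ` left)"
      by auto
    have "slope x0 \<le> slope y" if "y \<in> right" for y
      using convex_on_slope_left_le_right[OF f, of x0 y s] x0(1) that X(2)
      unfolding slope_def left_def right_def by auto
    then show ?thesis
      by (intro that[of "Max (slope ` left)"]) (use fin x0 in auto)
  qed
  show ?thesis
  proof (rule that)
    fix x assume "x \<in> X"
    consider "x < s" | "x = s" | "s < x" by linarith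
    then show "f s + L * (x - s) \<le> f x"
    proof cases
      case 1
      with \<open>x \<in> X\<close> L_left have "(f x - f s) / (x - s) \<le> L"
        unfolding slope_def left_def by auto
      with 1 show ?thesis by (simp add: divide_le_eq algebra_simps)
    next
      case 3
      with \<open>x \<in> X\<close> L_right have "L \<le> (f x - f s) / (x - s)"
        unfolding slope_def right_def by auto
      with 3 show ?thesis by (simp add: le_divide_eq algebra_simps)
    qed simp
  qed
qed

lemma convex_on_scale_le:
  fixes f :: "real \<Rightarrow> real"
  assumes "convex_on C f" "0 \<in> C" "f 0 = 0" "x \<in> C" "0 \<le> t" "t \<le> 1"
  shows "f (t * x) \<le> t * f x"
  using convex_onD[OF assms(1) assms(5,6,2,4)] assms(3) by simp

lemma odd_extension_ge_supporting_line:
  fixes f :: "real \<Rightarrow> real"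
  assumes f: "convex_on C f" and "0 \<in> C" "f 0 = 0" "s \<in> C"
    and L: "f s \<le> L * s" and x: "- s \<le> x" "x < 0" and odd: "f x = - f (- x)"
  shows "f s + L * (x - s) \<le> f x"
proof -
  have s_pos: "0 < s"
    using x by linarith
  have "0 \<le> - x / s" "- x / s \<le> 1"
    using x s_pos by (simp_all add: pos_le_divide_eq divide_nonpos_pos)
  from convex_on_scale_le[OF f \<open>0 \<in> C\<close> \<open>f 0 = 0\<close> \<open>s \<in> C\<close> this]
  have "f (- x / s * s) \<le> - x / s * f s" .
  with s_pos odd have "x / s * f s \<le> f x"
    by simp
  moreover have "x / s * f s - (f s + L * (x - s)) = (s - x) * (L * s - f s) / s"
    using s_pos by (simp add: field_simps)
  moreover have "0 \<le> (s - x) * (L * s - f s) / s"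
    using L x s_pos by (intro divide_nonneg_pos mult_nonneg_nonneg) simp_all
  ultimately show ?thesis
    by linarith
qed

lemma Min_le_weighted_mean:
  fixes a p :: "'i \<Rightarrow> real"
  assumes K: "finite K" and p_sum: "sum p K = 1" and p_nonneg: "\<And>k. k \<in> K \<Longrightarrow> p k \<ge> 0"
  shows "Min (a ` K) \<le> (\<Sum>k\<in>K. p k * a k)"
proof -
  have "Min (a ` K) = (\<Sum>k\<in>K. p k * Min (a ` K))"
    using p_sum by (simp only: sum_distrib_right [symmetric])
  also have "\<dots> \<le> (\<Sum>k\<in>K. p k * a k)"
    using K p_nonneg by (intro sum_mono mult_left_mono) auto
  finally show ?thesis .
qed

lemma le_sum_of_supporting_line:
  fixes p a :: "'i \<Rightarrow> real"
  assumes "finite K" and p_sum: "sum p K = 1" and p_nonneg: "\<And>k. k \<in> K \<Longrightarrow> p k \<ge> 0"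
    and below: "\<And>k. k \<in> K \<Longrightarrow> f s + L * (a k - s) \<le> f (a k)"
    and s: "s = (\<Sum>k\<in>K. p k * a k)"
  shows "f s \<le> (\<Sum>k\<in>K. p k * f (a k))"
proof -
  have "f s = (\<Sum>k\<in>K. p k * (f s + L * (a k - s)))"
    using p_sum s
    by (simp add: algebra_simps sum.distrib sum_subtractf flip: sum_distrib_left sum_distrib_right)
  also have "\<dots> \<le> (\<Sum>k\<in>K. p k * f (a k))"
    using p_nonneg below by (intro sum_mono mult_left_mono) auto
  finally show ?thesis .
qed

theorem jensen_odd_convex_on_nonneg:
  fixes I :: "real set" and f :: "real \<Rightarrow> real" and a p :: "'i \<Rightarrow> real"
  assumes I_int: "is_interval I" and I0: "0 \<in> I"
    and f_conv: "convex_on (I \<inter> {0..}) f"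
    and f_odd: "\<And>x. x \<in> I \<Longrightarrow> - x \<in> I \<Longrightarrow> f (- x) = - f x"
    and K: "finite K"
    and a_I: "\<And>k. k \<in> K \<Longrightarrow> a k \<in> I"
    and p_nonneg: "\<And>k. k \<in> K \<Longrightarrow> p k \<ge> 0"
    and p_sum: "sum p K = 1"
    and cond: "(\<Sum>k\<in>K. p k * a k) + Min (a ` K) \<ge> 0"
  shows "f (\<Sum>k\<in>K. p k * a k) \<le> (\<Sum>k\<in>K. p k * f (a k))"
proof -
  define s where "s = (\<Sum>k\<in>K. p k * a k)"
  define C where "C = I \<inter> {0..}"
  have "Min (a ` K) \<le> s"
    unfolding s_def using K p_sum p_nonneg by (rule Min_le_weighted_mean)
  with cond have s_nonneg: "0 \<le> s"
    unfolding s_def by linarith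
  have a_ge: "- s \<le> a k" if "k \<in> K" for k
    using Min_le[OF finite_imageI[OF K] imageI[OF that], of a] cond unfolding s_def by linarith
  have "s \<in> I"
    using convex_sum[OF K is_interval_convex[OF I_int] p_sum p_nonneg a_I] by (simp add: s_def)
  have f0: "f 0 = 0"
    using f_odd[OF I0] I0 by simp
  have "finite (insert 0 (C \<inter> a ` K))" "insert 0 (C \<inter> a ` K) \<subseteq> C"
    using K I0 by (auto simp: C_def)
  then obtain L where L: "\<And>x. x \<in> insert 0 (C \<inter> a ` K) \<Longrightarrow> f s + L * (x - s) \<le> f x"
    using convex_on_finite_supporting_line[where s = s, OF f_conv[folded C_def]] by blast
  have L_ge: "f s \<le> L * s"
    using L[of 0] f0 by simp
  have below: "f s + L * (a k - s) \<le> f (a k)" if "k \<in> K" for k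
  proof (cases "0 \<le> a k")
    case True
    with a_I that have "a k \<in> insert 0 (C \<inter> a ` K)"
      by (simp add: C_def)
    then show ?thesis
      by (rule L)
  next
    case False
    have "0 \<le> - a k" "- a k \<le> s"
      using False a_ge[OF that] by linarith+
    then have "- a k \<in> I"
      using I_int I0 \<open>s \<in> I\<close> unfolding is_interval_1 by blast
    with f_odd a_I that have "f (a k) = - f (- a k)"
      by (metis minus_minus)
    with False a_ge[OF that] show ?thesis
      using odd_extension_ge_supporting_line[OF f_conv _ f0 _ L_ge] I0 \<open>s \<in> I\<close> s_nonneg
      by simp
  qed
  have "f s \<le> (\<Sum>k\<in>K. p k * f (a k))"
    using le_sum_of_supporting_line[OF K p_sum p_nonneg below s_def] .
  then show ?thesis
    by (simp add: s_def)
qed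

theorem corollary2:
  fixes I :: "real set" and f :: "real \<Rightarrow> real"
    and n :: nat and a p :: "nat \<Rightarrow> real"
  assumes I_int: "is_interval I" and I0: "0 \<in> I"
    and f_conv: "convex_on (I \<inter> {0..}) f"
    and f_odd: "\<And>x. x \<in> I \<Longrightarrow> - x \<in> I \<Longrightarrow> f (- x) = - f x"
    and a_I: "\<And>k. k \<in> {1..n} \<Longrightarrow> a k \<in> I"
    and p_nonneg: "\<And>k. k \<in> {1..n} \<Longrightarrow> p k \<ge> 0"
    and p_sum: "(\<Sum>k=1..n. p k) = 1"
    and cond: "(\<Sum>k=1..n. p k * a k) + Min (a ` {1..n}) \<ge> 0"
  shows "f (\<Sum>k=1..n. p k * a k) \<le> (\<Sum>k=1..n. p k * f (a k))"
  using jensen_odd_convex_on_nonneg[where K = "{1..n}", OF I_int I0 f_conv f_odd] assms by simp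

end
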